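(* Let $M$ be a commutative monoid and $\mathcal{A}$ an $\mathbb{H}M$-module. For all integers $0<n<r$, $H^n(M,r;\mathcal{A})=0$.
   Context: Let $M$ be a commutative monoid with identity $e$. $\mathbb{H}M$ has objects the elements of $M$ and morphisms $(x,y):x\to xy$, composition $(xy,z)(x,y)=(x,yz)$. An $\mathbb{H}M$-module $\mathcal{A}$ is a functor $\mathbb{H}M\to\mathbf{Ab}$: groups $\mathcal{A}(x)$ with $y_*:\mathcal{A}(x)\to\mathcal{A}(xy)$, $y_*z_*=(yz)_*$, $e_*=\mathrm{id}$. Tensor product $(\mathcal{A}\otimes_{\mathbb{H}M}\mathcal{B})(x)=\bigoplus_{zt=x}\mathcal{A}(z)\otimes\mathcal{B}(t)/(u_*a\otimes b=a\otimes u_*b)$; unit the constant module $\mathbb{Z}$; chain complexes of $\mathbb{H}M$-modules form a symmetric monoidal category with Koszul signs. A commutative DGA-algebra over $\mathbb{H}M$ is a commutative monoid $(\mathcal{A},\circ,\iota)$ there with a monoid morphism $\epsilon:\mathcal{A}\to\mathbb{Z}$, $\epsilon_x(a)=\tilde\epsilon(a)x$. Its reduced bar construction $\mathbf{B}(\mathcal{A})$ has $\mathbf{B}(\mathcal{A})_n(x)$ generated by $[\,]$ (degree $0$) and $[a_1|\cdots|a_p]$ with $a_i\in(\mathrm{coker}\,\iota)_{r_i}(x_i)$, $x_1\cdots x_p=x$, $p+\sum r_i=n$; differential $\partial[a_1|\cdots|a_p]=-\sum_i(-1)^{e_{i-1}}[\cdots|\partial a_i|\cdots]+\tilde\epsilon(a_1)x_{1*}[a_2|\cdots]+\sum_{i<p}(-1)^{e_i}[\cdots|a_i\circ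 a_{i+1}|\cdots]+(-1)^{e_p}\tilde\epsilon(a_p)x_{p*}[\cdots|a_{p-1}]$, $e_i=i+r_1+\cdots+r_i$; multiplication the signed shuffle product $[a_1|\cdots|a_p]\circ[a_{p+1}|\cdots|a_{p+q}]=\sum_\sigma(-1)^{e(\sigma)}[a_{\sigma^{-1}(1)}|\cdots|a_{\sigma^{-1}(p+q)}]$, $e(\sigma)=\sum_{\sigma(i)>\sigma(p+j)}(1+r_i)(1+r_{p+j})$; unit $[\,]$; augmentation $\mathbf{B}(\mathcal{A})_0\cong\mathbb{Z}$. It is again such an algebra, so $\mathbf{B}^r$ is defined. $\mathcal{Z}M$: $\mathcal{Z}M(x)$ free abelian on $\{(u,v):uv=x\}$, $y_*(u,v)=(yu,v)$, $(u,v)\circ(w,t)=(uw,vt)$, unit $(e,e)$, degree $0$, augmentation $(u,v)\mapsto$ generator of $\mathbb{Z}(x)$. $H^n(M,r;\mathcal{A})=H^n(\mathrm{Hom}_{\mathbb{H}M}(\mathbf{B}^r(\mathcal{Z}M),\mathcal{A}))$. *)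

theory Defs
  imports "HOL-Algebra.Group"
begin

text \<open>An HM-module is a family of abelian groups A x (x in M) with homomorphisms
  act x y : A x -> A (x*y)  (the map y_* ), functorial: 1_* = id, y_* z_* = (z*y)_*.\<close>

definition HM_module ::
  "('m::comm_monoid_mult \<Rightarrow> ('a,'b) monoid_scheme) \<Rightarrow> ('m \<Rightarrow> 'm \<Rightarrow> 'a \<Rightarrow> 'a) \<Rightarrow> bool" where
  "HM_module A act \<longleftrightarrow>
     (\<forall>x. comm_group (A x)) \<and>
     (\<forall>x y. act x y \<in> hom (A x) (A (x * y))) \<and>
     (\<forall>x a. a \<in> carrier (A x) \<longrightarrow> act x 1 a = a) \<and>
     (\<forall>x y z a. a \<in> carrier (A x) \<longrightarrow> act (x * z) y (act x z a) = act x (z * y) a)"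

text \<open>Level 0 cells Gen u v are the basis (u,v) of ZM(u*v).  A level r+1 cell is either
  Emp x, the generator x_*[] of B_0(x), or a bar word Wrd [a1,...,ap] (p>0) of level r cells.
  Elements of B^r(ZM) are represented by formal integer combinations of cells, modulo the
  relations given by rels below.\<close>

datatype 'm cell = Gen 'm 'm | Emp 'm | Wrd "'m cell list"

type_synonym 'm fs = "(int \<times> 'm cell) list"

fun deg :: "'m cell \<Rightarrow> nat" where
  "deg (Gen u v) = 0"
| "deg (Emp x) = 0"
| "deg (Wrd cs) = length cs + sum_list (map deg cs)"

fun wt :: "'m::comm_monoid_mult cell \<Rightarrow> 'm" where
  "wt (Gen u v) = u * v"
| "wt (Emp x) = x"
| "wt (Wrd cs) = prod_list (map wt cs)"

fun lev :: "nat \<Rightarrow> 'm cell \<Rightarrow> bool" where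
  "lev 0 c = (case c of Gen u v \<Rightarrow> True | _ \<Rightarrow> False)"
| "lev (Suc r) c = (case c of Emp x \<Rightarrow> True
                     | Wrd cs \<Rightarrow> cs \<noteq> [] \<and> (\<forall>d\<in>set cs. lev r d)
                     | Gen u v \<Rightarrow> False)"

fun act_c :: "'m::comm_monoid_mult \<Rightarrow> 'm cell \<Rightarrow> 'm cell" where
  "act_c y (Gen u v) = Gen (y * u) v"
| "act_c y (Emp x) = Emp (y * x)"
| "act_c y (Wrd []) = Wrd []"
| "act_c y (Wrd (c # cs)) = Wrd (act_c y c # cs)"

text \<open>Cells representing the image of the unit iota (x_*(e,e) = (x,e), resp. x_*[]).\<close>
definition is_unit :: "'m::comm_monoid_mult cell \<Rightarrow> bool" where
  "is_unit c \<longleftrightarrow> (\<exists>x. c = Gen x 1) \<or> (\<exists>x. c = Emp x)"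

fun eps :: "'m cell \<Rightarrow> int" where
  "eps (Gen u v) = 1"
| "eps (Emp x) = 1"
| "eps (Wrd cs) = 0"

definition smul :: "int \<Rightarrow> 'm fs \<Rightarrow> 'm fs" where
  "smul k l = map (\<lambda>(j, c). (k * j, c)) l"

fun shuf :: "'m cell list \<Rightarrow> 'm cell list \<Rightarrow> (int \<times> 'm cell list) list" where
  "shuf [] ys = [(1, ys)]"
| "shuf xs [] = [(1, xs)]"
| "shuf (x # xs) (y # ys) =
     map (\<lambda>(k, w). (k, x # w)) (shuf xs (y # ys)) @
     map (\<lambda>(k, w). ((-1) ^ ((1 + deg y) * sum_list (map (\<lambda>c. 1 + deg c) (x # xs))) * k, y # w))
         (shuf (x # xs) ys)"

text \<open>Products: in ZM, (u,v)o(w,t) = (uw,vt); in a bar construction, [] is the unit and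
  words multiply by the signed shuffle product.\<close>
fun cprod :: "'m::comm_monoid_mult cell \<Rightarrow> 'm cell \<Rightarrow> 'm fs" where
  "cprod (Gen u v) (Gen w t) = [(1, Gen (u * w) (v * t))]"
| "cprod (Emp x) d = [(1, act_c x d)]"
| "cprod c (Emp x) = [(1, act_c x c)]"
| "cprod (Wrd xs) (Wrd ys) = map (\<lambda>(k, w). (k, Wrd w)) (shuf xs ys)"
| "cprod _ _ = []"

definition bar_diff :: "'m::comm_monoid_mult cell list \<Rightarrow> 'm fs list \<Rightarrow> 'm fs" where
  "bar_diff cs ds = (if cs = [] then [] else
     (let p = length cs;
          E = (\<lambda>k. k + sum_list (map deg (take k cs)));
          t1 = concat (map (\<lambda>k. smul (- ((-1) ^ E k))
                  (map (\<lambda>(j, c). (j, Wrd (take k cs @ c # drop (Suc k) cs))) (ds ! k))) [0..<p]);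
          t2 = smul (eps (hd cs))
                  [(1, if p = 1 then Emp (wt (hd cs)) else act_c (wt (hd cs)) (Wrd (tl cs)))];
          t3 = concat (map (\<lambda>k. smul ((-1) ^ E (Suc k))
                  (map (\<lambda>(j, c). (j, Wrd (take k cs @ c # drop (Suc (Suc k)) cs)))
                     (cprod (cs ! k) (cs ! Suc k)))) [0..<p - 1]);
          t4 = smul ((-1) ^ E p * eps (last cs))
                  [(1, if p = 1 then Emp (wt (last cs)) else act_c (wt (last cs)) (Wrd (butlast cs)))]
      in t1 @ t2 @ t3 @ t4))"

fun bd :: "'m::comm_monoid_mult cell \<Rightarrow> 'm fs" where
  "bd (Gen u v) = []"
| "bd (Emp x) = []"
| "bd (Wrd cs) = bar_diff cs (map bd cs)"

text \<open>Generators of the relation subgroup of level r: B^(r+1)(ZM) is the free abelian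
  group on level r+1 cells modulo: letters in the image of iota (cokernel), the
  tensor-over-HM relations between adjacent letters, and relations of level r in a letter.\<close>
inductive is_rel :: "nat \<Rightarrow> 'm::comm_monoid_mult fs \<Rightarrow> bool" where
  coker: "\<lbrakk> \<forall>d\<in>set cs. lev r d; c \<in> set cs; is_unit c \<rbrakk> \<Longrightarrow> is_rel (Suc r) [(1, Wrd cs)]"
| tens: "\<lbrakk> \<forall>d\<in>set (pre @ post). lev r d; lev r c; lev r d \<rbrakk> \<Longrightarrow>
           is_rel (Suc r) [(1, Wrd (pre @ act_c y c # d # post)), (-1, Wrd (pre @ c # act_c y d # post))]"
| slot: "\<lbrakk> is_rel r \<rho>; \<forall>d\<in>set (pre @ post). lev r d \<rbrakk> \<Longrightarrow>
           is_rel (Suc r) (map (\<lambda>(k, c). (k, Wrd (pre @ c # post))) \<rho>)"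

definition lin :: "('m \<Rightarrow> ('a,'b) monoid_scheme) \<Rightarrow> ('m cell \<Rightarrow> 'a) \<Rightarrow> 'm fs \<Rightarrow> 'm \<Rightarrow> 'a" where
  "lin A f l x = foldr (\<lambda>(k, c) acc. (f c [^]\<^bsub>A x\<^esub> k) \<otimes>\<^bsub>A x\<^esub> acc) l \<one>\<^bsub>A x\<^esub>"

text \<open>A degree-n cochain: an HM-linear map B^r(ZM)_n -> A, given by its (extensional) values
  on cells, natural in HM and killing all relations.\<close>
definition cochain ::
  "('m::comm_monoid_mult \<Rightarrow> ('a,'b) monoid_scheme) \<Rightarrow> ('m \<Rightarrow> 'm \<Rightarrow> 'a \<Rightarrow> 'a) \<Rightarrow> nat \<Rightarrow> nat
     \<Rightarrow> ('m cell \<Rightarrow> 'a) \<Rightarrow> bool" where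
  "cochain A act r n f \<longleftrightarrow>
     (\<forall>c. lev r c \<and> deg c = n \<longrightarrow> f c \<in> carrier (A (wt c))) \<and>
     (\<forall>c. \<not> (lev r c \<and> deg c = n) \<longrightarrow> f c = \<one>\<^bsub>A (wt c)\<^esub>) \<and>
     (\<forall>c y. lev r c \<and> deg c = n \<longrightarrow> f (act_c y c) = act (wt c) y (f c)) \<and>
     (\<forall>\<rho> x. is_rel r \<rho> \<and> (\<forall>(k, c)\<in>set \<rho>. wt c = x \<and> deg c = n) \<longrightarrow> lin A f \<rho> x = \<one>\<^bsub>A x\<^esub>)"

definition cobd :: "('m::comm_monoid_mult \<Rightarrow> ('a,'b) monoid_scheme) \<Rightarrow> nat \<Rightarrow> nat
     \<Rightarrow> ('m cell \<Rightarrow> 'a) \<Rightarrow> ('m cell \<Rightarrow> 'a)" where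
  "cobd A r n f = (\<lambda>c. if lev r c \<and> deg c = Suc n then lin A f (bd c) (wt c) else \<one>\<^bsub>A (wt c)\<^esub>)"

definition cohomology_vanishes ::
  "('m::comm_monoid_mult \<Rightarrow> ('a,'b) monoid_scheme) \<Rightarrow> ('m \<Rightarrow> 'm \<Rightarrow> 'a \<Rightarrow> 'a) \<Rightarrow> nat \<Rightarrow> nat \<Rightarrow> bool" where
  "cohomology_vanishes A act r n \<longleftrightarrow>
     (\<forall>f. cochain A act r n f \<and> (\<forall>c. cobd A r n f c = \<one>\<^bsub>A (wt c)\<^esub>) \<longrightarrow>
        (if n = 0 then f = (\<lambda>c. \<one>\<^bsub>A (wt c)\<^esub>)
         else (\<exists>g. cochain A act r (n - 1) g \<and> f = cobd A r (n - 1) g)))"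

end

theory Submission
  imports Defs "HOL-Library.Multiset"
begin

text \<open>A bar word [a_1|...|a_p] has degree p + \<Sum> deg a_i, so if a level-r word has degree
  below r then one of its letters has degree below r - 1. That letter is either in the image of
  the unit, and the cokernel relation kills the word, or it is again a bar word of too low
  degree, killed by induction. Hence B^r(ZM)_n = 0 for 0 < n < r: every n-cochain is zero,
  and so it is the coboundary of the zero (n-1)-cochain, the differential being homogeneous
  for the M-grading.\<close>

text \<open>act_c fixes the empty word, so it multiplies weights only on cells free of empty words.\<close>
fun nonempty_cell :: "'m cell \<Rightarrow> bool" where
  "nonempty_cell (Gen u v) = True"
| "nonempty_cell (Emp x) = True"
| "nonempty_cell (Wrd cs) = (cs \<noteq> [] \<and> (\<forall>d\<in>set cs. nonempty_cell d))"

lemma lev_imp_nonempty_cell: "lev r c \<Longrightarrow> nonempty_cell c"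
proof (induction r arbitrary: c)
  case 0 then show ?case by (cases c) auto
next
  case (Suc r) then show ?case by (cases c) auto
qed

lemma wt_act_c: "nonempty_cell c \<Longrightarrow> wt (act_c y c) = y * wt c"
  by (induction y c rule: act_c.induct) (auto simp: mult.assoc)

lemma wt_Wrd_insert: "wt (Wrd (pre @ c # post)) = wt (Wrd pre) * wt c * wt (Wrd post)"
  by (simp add: mult.assoc)

lemma wt_Wrd_take_drop: "wt (Wrd cs) = wt (Wrd (take k cs)) * wt (Wrd (drop k cs))"
  by (metis append_take_drop_id map_append prod_list.append wt.simps(3))

lemma mset_shuf: "(k, w) \<in> set (shuf xs ys) \<Longrightarrow> mset w = mset xs + mset ys"
  by (induction xs ys arbitrary: k w rule: shuf.induct) auto

definition homogeneous :: "'m::comm_monoid_mult \<Rightarrow> 'm fs \<Rightarrow> bool" where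
  "homogeneous x l \<longleftrightarrow> (\<forall>(j, d)\<in>set l. wt d = x)"

lemma homogeneous_simps [simp]:
  "homogeneous x []"
  "homogeneous x ((j, d) # l) \<longleftrightarrow> wt d = x \<and> homogeneous x l"
  "homogeneous x (l @ l') \<longleftrightarrow> homogeneous x l \<and> homogeneous x l'"
  "homogeneous x (concat ls) \<longleftrightarrow> (\<forall>l\<in>set ls. homogeneous x l)"
  "homogeneous x (smul k l) \<longleftrightarrow> homogeneous x l"
  by (auto simp: homogeneous_def smul_def)

lemma homogeneous_insert:
  "homogeneous y l \<Longrightarrow>
     homogeneous (wt (Wrd pre) * y * wt (Wrd post)) (map (\<lambda>(j, c). (j, Wrd (pre @ c # post))) l)"
  by (fastforce simp: homogeneous_def mult.assoc)

lemma homogeneous_cprod: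
  assumes "nonempty_cell a" "nonempty_cell b"
  shows "homogeneous (wt a * wt b) (cprod a b)"
  using assms
proof (induction a b rule: cprod.induct)
  case (4 xs ys)
  have "wt (Wrd w) = wt (Wrd xs) * wt (Wrd ys)" if "(k, w) \<in> set (shuf xs ys)" for k w
    using mset_shuf[OF that] by (metis mset_append mset_map prod_list.append map_append
        prod_mset_prod_list wt.simps(3))
  then show ?case by (auto simp: homogeneous_def)
qed (auto simp: homogeneous_def wt_act_c mult_ac)

lemma homogeneous_bar_diff:
  assumes ne: "\<forall>d\<in>set cs. nonempty_cell d"
    and ds: "\<And>k. k < length cs \<Longrightarrow> homogeneous (wt (cs ! k)) (ds ! k)"
  shows "homogeneous (wt (Wrd cs)) (bar_diff cs ds)"
proof (cases "cs = []")
  case False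
  have face: "homogeneous (wt (Wrd cs))
      (map (\<lambda>(j, c). (j, Wrd (take k cs @ c # drop (Suc k) cs))) (ds ! k))" if "k < length cs" for k
  proof -
    have "wt (Wrd cs) = wt (Wrd (take k cs)) * wt (cs ! k) * wt (Wrd (drop (Suc k) cs))"
      using wt_Wrd_insert id_take_nth_drop[OF that] by metis
    then show ?thesis using homogeneous_insert ds[OF that] by metis
  qed
  have product: "homogeneous (wt (Wrd cs))
      (map (\<lambda>(j, c). (j, Wrd (take k cs @ c # drop (Suc (Suc k)) cs))) (cprod (cs ! k) (cs ! Suc k)))"
    if "Suc k < length cs" for k
  proof -
    have "drop k cs = cs ! k # cs ! Suc k # drop (Suc (Suc k)) cs"
      using that by (simp add: Cons_nth_drop_Suc)
    then have "wt (Wrd cs) = wt (Wrd (take k cs)) * (wt (cs ! k) * wt (cs ! Suc k))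
        * wt (Wrd (drop (Suc (Suc k)) cs))"
      using wt_Wrd_take_drop[of cs k] by (simp add: mult.assoc)
    moreover have "homogeneous (wt (cs ! k) * wt (cs ! Suc k)) (cprod (cs ! k) (cs ! Suc k))"
      using that ne by (intro homogeneous_cprod) auto
    ultimately show ?thesis using homogeneous_insert by metis
  qed
  have first: "wt (if length cs = 1 then Emp (wt (hd cs)) else act_c (wt (hd cs)) (Wrd (tl cs)))
      = wt (Wrd cs)"
    using False ne by (cases cs) (auto simp: wt_act_c)
  have last: "wt (if length cs = 1 then Emp (wt (last cs)) else act_c (wt (last cs)) (Wrd (butlast cs)))
      = wt (Wrd cs)"
    using False ne by (cases cs rule: rev_cases) (auto simp: wt_act_c mult.commute)
  show ?thesis
    using False face product first last
    unfolding bar_diff_def Let_def by (simp del: wt.simps)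
qed (simp add: bar_diff_def)

lemma homogeneous_bd: "nonempty_cell c \<Longrightarrow> homogeneous (wt c) (bd c)"
proof (induction c rule: bd.induct)
  case (3 cs)
  then show ?case unfolding bd.simps by (intro homogeneous_bar_diff) auto
qed auto

lemma deg_Wrd_ge:
  assumes "cs \<noteq> []" "\<forall>d\<in>set cs. r \<le> deg d"
  shows "Suc r \<le> deg (Wrd cs)"
  using assms by (cases cs) auto

lemma lev_Wrd_low_degree_is_rel:
  "lev r (Wrd cs) \<Longrightarrow> deg (Wrd cs) < r \<Longrightarrow> is_rel r [(1, Wrd cs)]"
proof (induction r arbitrary: cs)
  case (Suc r)
  then have letters: "cs \<noteq> []" "\<forall>d\<in>set cs. lev r d" by auto
  consider (unit) c where "c \<in> set cs" "is_unit c"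
    | (low) d where "d \<in> set cs" "deg d < r" "\<not> is_unit d"
    | (high) "\<forall>d\<in>set cs. r \<le> deg d"
    by (meson not_le)
  then show ?case
  proof cases
    case unit
    then show ?thesis using letters by (intro is_rel.coker) auto
  next
    case low
    have "lev r d" using low letters by auto
    then obtain ds where d: "d = Wrd ds"
      using low(2,3) by (cases r; cases d) (auto simp: is_unit_def)
    then have "is_rel r [(1, d)]" using low letters Suc.IH by auto
    moreover obtain pre post where "cs = pre @ d # post" using low split_list by metis
    ultimately show ?thesis
      using letters is_rel.slot[of r "[(1, d)]" pre post] by auto
  next
    case high
    then show ?thesis using deg_Wrd_ge[OF letters(1)] Suc.prems(2) by fastforce
  qed
qed simp

abbreviation zero_cochain :: "('m::comm_monoid_mult \<Rightarrow> ('a, 'b) monoid_scheme) \<Rightarrow> 'm cell \<Rightarrow> 'a" where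
  "zero_cochain A \<equiv> \<lambda>c. \<one>\<^bsub>A (wt c)\<^esub>"

lemma cochain_vanishes_in_low_degree:
  assumes grp: "\<And>x. group (A x)" and f: "cochain A act r n f" and "0 < n" "n < r"
  shows "f = zero_cochain A"
proof
  fix c
  show "f c = \<one>\<^bsub>A (wt c)\<^esub>"
  proof (cases "lev r c \<and> deg c = n")
    case True
    then obtain cs where c: "c = Wrd cs"
      using \<open>0 < n\<close> \<open>n < r\<close> by (cases c; cases r) auto
    interpret G: group "A (wt c)" by (rule grp)
    have "is_rel r [(1, c)]"
      using True c \<open>n < r\<close> by (auto intro: lev_Wrd_low_degree_is_rel)
    then have "lin A f [(1, c)] (wt c) = \<one>\<^bsub>A (wt c)\<^esub>"
      using f True unfolding cochain_def by auto
    moreover have "f c \<in> carrier (A (wt c))"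
      using f True unfolding cochain_def by auto
    ultimately show ?thesis by (simp add: lin_def)
  qed (use f in \<open>auto simp: cochain_def\<close>)
qed

lemma lin_zero_cochain:
  assumes "homogeneous x l" "group (A x)"
  shows "lin A (zero_cochain A) l x = \<one>\<^bsub>A x\<^esub>"
proof -
  interpret G: group "A x" by fact
  show ?thesis using assms(1) by (induction l) (auto simp: lin_def)
qed

lemma HM_module_group: "HM_module A act \<Longrightarrow> group (A x)"
  unfolding HM_module_def using comm_group.axioms(2) by metis

lemma cochain_zero:
  fixes A :: "'m::comm_monoid_mult \<Rightarrow> ('a, 'b) monoid_scheme"
  assumes "HM_module A act"
  shows "cochain A act r n (zero_cochain A)"
  unfolding cochain_def
proof (intro conjI allI impI)
  note grp = HM_module_group[OF assms]
  fix c :: "'m cell"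
  show "\<one>\<^bsub>A (wt c)\<^esub> \<in> carrier (A (wt c))" by (simp add: grp group.is_monoid)
  fix y assume "lev r c \<and> deg c = n"
  then have "wt (act_c y c) = wt c * y"
    using lev_imp_nonempty_cell wt_act_c mult.commute by metis
  moreover have "act (wt c) y \<in> hom (A (wt c)) (A (wt c * y))"
    using assms unfolding HM_module_def by blast
  ultimately show "\<one>\<^bsub>A (wt (act_c y c))\<^esub> = act (wt c) y \<one>\<^bsub>A (wt c)\<^esub>"
    using hom_one[OF _ grp grp] by simp
next
  fix \<rho> :: "'m fs" and x assume "is_rel r \<rho> \<and> (\<forall>(k, c)\<in>set \<rho>. wt c = x \<and> deg c = n)"
  then have "homogeneous x \<rho>" by (auto simp: homogeneous_def)
  then show "lin A (zero_cochain A) \<rho> x = \<one>\<^bsub>A x\<^esub>"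
    using lin_zero_cochain HM_module_group[OF assms] by metis
qed simp

lemma cobd_zero_cochain:
  assumes "\<And>x. group (A x)"
  shows "cobd A r n (zero_cochain A) = zero_cochain A"
proof -
  have "lin A (zero_cochain A) (bd c) (wt c) = \<one>\<^bsub>A (wt c)\<^esub>" if "lev r c" for c
    using lin_zero_cochain[OF homogeneous_bd[OF lev_imp_nonempty_cell[OF that]] assms] .
  then show ?thesis by (auto simp: cobd_def)
qed

theorem corollary5p6:
  fixes A :: "'m::comm_monoid_mult \<Rightarrow> ('a,'b) monoid_scheme"
    and act :: "'m \<Rightarrow> 'm \<Rightarrow> 'a \<Rightarrow> 'a"
    and n r :: nat
  assumes "HM_module A act" and "0 < n" and "n < r"
  shows "cohomology_vanishes A act r n"
  unfolding cohomology_vanishes_def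
proof (intro allI impI)
  note grp = HM_module_group[OF assms(1)]
  fix f assume "cochain A act r n f \<and> (\<forall>c. cobd A r n f c = \<one>\<^bsub>A (wt c)\<^esub>)"
  then have "f = zero_cochain A"
    using cochain_vanishes_in_low_degree[OF _ _ assms(2,3)] grp by blast
  also have "\<dots> = cobd A r (n - 1) (zero_cochain A)"
    by (rule cobd_zero_cochain[symmetric]) (rule grp)
  finally show "if n = 0 then f = zero_cochain A
      else \<exists>g. cochain A act r (n - 1) g \<and> f = cobd A r (n - 1) g"
    using cochain_zero[OF assms(1)] assms(2) by auto
qed

end
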